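(* Let $q$ be a prime with $q \equiv 1 \pmod 6$ or $q = 3$, and let $s$ be an integer with $\Phi_6(s) \equiv 0 \pmod q$ or $\Phi_3(s) \equiv 0 \pmod q$, where $\Phi_3(x)=x^2+x+1$, $\Phi_4(x)=x^2+1$, $\Phi_6(x)=x^2-x+1$. Define \begin{align*} f_1(x) &= qx^2+(2s+1)x+\Phi_3(s)/q, & f_2(x) &= q^2x^2+(2s-1)qx+\Phi_6(s),\\ f_3(x) &= q^2x^2+(2s+1)qx+\Phi_3(s), & f_4(x) &= qx^2+(2s-1)x+\Phi_6(s)/q. \end{align*} Then for all $x\in\mathbb{Z}$, \[ \Phi_6(\Phi_4(qx+s)) = \begin{cases} q\,f_1(x)f_2(x), & \text{if } q \mid \Phi_3(s),\\ q\,f_3(x)f_4(x), & \text{if } q \mid \Phi_6(s),\end{cases} \] and (in each case in which they have integer coefficients) the polynomials $f_1, f_2, f_3, f_4$ are irreducible over $\mathbb{Z}$.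
   Context: A polynomial in $\mathbb{Z}[x]$ is called irreducible over $\mathbb{Z}$ if it is not a product of two non-constant polynomials with integer coefficients. *)

theory Defs
  imports "HOL-Computational_Algebra.Polynomial"
begin

definition Phi3 :: "int \<Rightarrow> int" where "Phi3 x = x^2 + x + 1"
definition Phi4 :: "int \<Rightarrow> int" where "Phi4 x = x^2 + 1"
definition Phi6 :: "int \<Rightarrow> int" where "Phi6 x = x^2 - x + 1"

definition irreducible_over_Z :: "int poly \<Rightarrow> bool" where
  "irreducible_over_Z p \<longleftrightarrow>
     \<not> (\<exists>g h :: int poly. degree g > 0 \<and> degree h > 0 \<and> p = g * h)"

text \<open>f1 and f4 are only meaningful (integer coefficients) when q divides
  Phi3 s resp. Phi6 s; then div is exact division.\<close>
definition f1 :: "int \<Rightarrow> int \<Rightarrow> int poly" where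
  "f1 q s = [: Phi3 s div q, 2*s + 1, q :]"
definition f2 :: "int \<Rightarrow> int \<Rightarrow> int poly" where
  "f2 q s = [: Phi6 s, (2*s - 1) * q, q^2 :]"
definition f3 :: "int \<Rightarrow> int \<Rightarrow> int poly" where
  "f3 q s = [: Phi3 s, (2*s + 1) * q, q^2 :]"
definition f4 :: "int \<Rightarrow> int \<Rightarrow> int poly" where
  "f4 q s = [: Phi6 s div q, 2*s - 1, q :]"

end

theory Submission
  imports Defs
begin

(* Phi6(Phi4 y) = Phi3 y * Phi6 y, and substituting y = q x + s turns Phi3 and Phi6 into f3 and f2;
   when q divides Phi3 s (resp. Phi6 s), f3 = q f1 (resp. f2 = q f4). A splitting of a quadratic
   into non-constant integer factors is a product of two linear factors, which makes its
   discriminant a square; but the four quadratics have discriminant -3 or -3 q^2. *)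

lemma irreducible_over_Z_quadratic:
  fixes a b c :: int
  assumes "c \<noteq> 0" and "b^2 - 4*a*c < 0"
  shows "irreducible_over_Z [:a, b, c:]"
  unfolding irreducible_over_Z_def
proof
  assume "\<exists>g h :: int poly. degree g > 0 \<and> degree h > 0 \<and> [:a, b, c:] = g * h"
  then obtain g h :: "int poly" where g: "degree g > 0" and h: "degree h > 0"
    and p: "[:a, b, c:] = g * h" by blast
  have "degree g + degree h = degree [:a, b, c:]"
    using p g h by (metis degree_0 degree_mult_eq less_irrefl)
  also have "\<dots> = 2"
    using \<open>c \<noteq> 0\<close> by simp
  finally have "degree g + degree h = 2" .
  then have "degree g = 1" "degree h = 1" using g h by linarith+
  then obtain g1 g0 h1 h0 where "g = [:g0, g1:]" and "h = [:h0, h1:]"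
    by (metis degree1_coeffs)
  with p have "a = g0*h0" "b = g0*h1 + g1*h0" "c = g1*h1" by auto
  then have "b^2 - 4*a*c = (g0*h1 - g1*h0)^2" by (simp add: power2_eq_square algebra_simps)
  then show False using \<open>b^2 - 4*a*c < 0\<close> by (metis not_less zero_le_power2)
qed

lemma Phi6_Phi4: "Phi6 (Phi4 y) = Phi3 y * Phi6 y"
  unfolding Phi6_def Phi4_def Phi3_def by (simp add: power2_eq_square algebra_simps)

lemma Phi3_linear_subst: "Phi3 (q*x + s) = poly (f3 q s) x"
  unfolding Phi3_def f3_def by (simp add: power2_eq_square algebra_simps)

lemma Phi6_linear_subst: "Phi6 (q*x + s) = poly (f2 q s) x"
  unfolding Phi6_def f2_def by (simp add: power2_eq_square algebra_simps)

lemma f3_eq_smult_f1: "q dvd Phi3 s \<Longrightarrow> f3 q s = smult q (f1 q s)"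
  unfolding f1_def f3_def by (simp add: power2_eq_square)

lemma f2_eq_smult_f4: "q dvd Phi6 s \<Longrightarrow> f2 q s = smult q (f4 q s)"
  unfolding f2_def f4_def by (simp add: power2_eq_square)

lemma Phi3_discriminant: "(2*s + 1)^2 - 4 * Phi3 s = -3"
  unfolding Phi3_def by (simp add: power2_eq_square algebra_simps)

lemma Phi6_discriminant: "(2*s - 1)^2 - 4 * Phi6 s = -3"
  unfolding Phi6_def by (simp add: power2_eq_square algebra_simps)

lemma irreducible_f1:
  assumes "q \<noteq> 0" and "q dvd Phi3 s"
  shows "irreducible_over_Z (f1 q s)"
proof -
  have "(2*s + 1)^2 - 4 * (Phi3 s div q) * q = -3"
    using assms(2) Phi3_discriminant[of s] by (simp add: mult.assoc)
  then show ?thesis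
    unfolding f1_def using assms(1) by (intro irreducible_over_Z_quadratic) auto
qed

lemma irreducible_f2:
  assumes "q \<noteq> 0"
  shows "irreducible_over_Z (f2 q s)"
proof -
  have "((2*s - 1) * q)^2 - 4 * Phi6 s * q^2 = q^2 * ((2*s - 1)^2 - 4 * Phi6 s)"
    by (simp add: power2_eq_square algebra_simps)
  also have "\<dots> = -3 * q^2"
    by (simp add: Phi6_discriminant)
  finally show ?thesis
    unfolding f2_def using assms by (intro irreducible_over_Z_quadratic) auto
qed

lemma irreducible_f3:
  assumes "q \<noteq> 0"
  shows "irreducible_over_Z (f3 q s)"
proof -
  have "((2*s + 1) * q)^2 - 4 * Phi3 s * q^2 = q^2 * ((2*s + 1)^2 - 4 * Phi3 s)"
    by (simp add: power2_eq_square algebra_simps)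
  also have "\<dots> = -3 * q^2"
    by (simp add: Phi3_discriminant)
  finally show ?thesis
    unfolding f3_def using assms by (intro irreducible_over_Z_quadratic) auto
qed

lemma irreducible_f4:
  assumes "q \<noteq> 0" and "q dvd Phi6 s"
  shows "irreducible_over_Z (f4 q s)"
proof -
  have "(2*s - 1)^2 - 4 * (Phi6 s div q) * q = -3"
    using assms(2) Phi6_discriminant[of s] by (simp add: mult.assoc)
  then show ?thesis
    unfolding f4_def using assms(1) by (intro irreducible_over_Z_quadratic) auto
qed

theorem lemma1:
  fixes q s :: int
  assumes "prime q"
    and "q mod 6 = 1 \<or> q = 3"
    and "q dvd Phi6 s \<or> q dvd Phi3 s"
  shows "(\<forall>x::int.
            (q dvd Phi3 s \<longrightarrow>
               Phi6 (Phi4 (q*x + s)) = q * poly (f1 q s) x * poly (f2 q s) x) \<and>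
            (q dvd Phi6 s \<longrightarrow>
               Phi6 (Phi4 (q*x + s)) = q * poly (f3 q s) x * poly (f4 q s) x))
       \<and> (q dvd Phi3 s \<longrightarrow> irreducible_over_Z (f1 q s))
       \<and> irreducible_over_Z (f2 q s)
       \<and> irreducible_over_Z (f3 q s)
       \<and> (q dvd Phi6 s \<longrightarrow> irreducible_over_Z (f4 q s))"
proof -
  have factor: "Phi6 (Phi4 (q*x + s)) = poly (f3 q s) x * poly (f2 q s) x" for x
    by (simp add: Phi6_Phi4 Phi3_linear_subst Phi6_linear_subst)
  have "q \<noteq> 0" using \<open>prime q\<close> by auto
  moreover have "Phi6 (Phi4 (q*x + s)) = q * poly (f1 q s) x * poly (f2 q s) x"
    if "q dvd Phi3 s" for x
    using factor[of x] by (simp add: f3_eq_smult_f1[OF that])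
  moreover have "Phi6 (Phi4 (q*x + s)) = q * poly (f3 q s) x * poly (f4 q s) x"
    if "q dvd Phi6 s" for x
    using factor[of x] by (simp add: f2_eq_smult_f4[OF that] mult_ac)
  ultimately show ?thesis
    using irreducible_f1 irreducible_f2 irreducible_f3 irreducible_f4 by blast
qed

end
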